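(* Let $\mathcal{X},\mathcal{Y}$ be finite, $P_X$ a distribution on $\mathcal{X}$, $P_{Y|X}$ a channel, $P_{XY}=P_XP_{Y|X}$, $R\ge0$, and $M=\exp(nR)$. For a joint $n$-type $Q_{\bar X\bar Y}$ let $(\bar X,\bar Y)\sim Q_{\bar X\bar Y}$ and $Q_{\bar Y}$ its $\mathcal{Y}$-marginal. Then \[ \lim_{n\to\infty}-\frac1n\log\max_{Q_{\bar X\bar Y}\in\mathcal{P}_n(\mathcal{X}\times\mathcal{Y})}\Big\{\tfrac12\big|\mathcal{T}^n_{Q_{\bar Y}}\big|\exp\big(-n\,\mathbb{E}[\imath_{P_{Y|X}}(\bar Y|\bar X)]\big)\mathfrak{Y}(M,Q_{\bar X\bar Y})\Big\} =\inf_{Q_{\bar X\bar Y}\in\mathcal{P}_\infty(\mathcal{X}\times\mathcal{Y})}\Big\{D(Q_{\bar X\bar Y}\|P_{XY})+\tfrac12\big[R-D(Q_{\bar X\bar Y}\|P_XQ_{\bar Y})\big]_+\Big\}, \] where $\mathcal{P}_\infty(\mathcal{X}\times\mathcal{Y})=\bigcup_{n\ge1}\mathcal{P}_n(\mathcal{X}\times\mathcal{Y})$ and $[f]_+=\max\{0,f\}$.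
   Context: Logs and exps use a common base; $D$ is relative entropy; $\imath_{P_{Y|X}}(y|x)=\log\frac1{P_{Y|X}(y|x)}$. $\mathcal{P}_n(\mathcal{X}\times\mathcal{Y})$ is the set of joint $n$-types and $\mathcal{T}^n_{Q_{\bar Y}}$ is the type class of $Q_{\bar Y}$. For $y^n\in\mathcal{T}^n_{Q_{\bar Y}}$, let $\mathcal{T}^n_{Q_{\bar X|\bar Y}}(y^n)$ be the set of $x^n$ whose joint empirical distribution with $y^n$ is $Q_{\bar X\bar Y}$, $p_{Q_{\bar X|\bar Y}}(y^n)=\mathbb{P}[X^n\in\mathcal{T}^n_{Q_{\bar X|\bar Y}}(y^n)]$ with $X^n$ i.i.d. $P_X$ (depending on $y^n$ only through its type), and $\mathfrak{Y}(M,Q_{\bar X\bar Y})=\min\{2p_{Q_{\bar X|\bar Y}}(y^n),M^{-1/2}p_{Q_{\bar X|\bar Y}}^{1/2}(y^n)\}$. *)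

theory Defs
  imports Complex_Main "HOL-Library.Extended_Real"
begin

definition is_dist :: "('a::finite \<Rightarrow> real) \<Rightarrow> bool" where
  "is_dist P \<longleftrightarrow> (\<forall>a. P a \<ge> 0) \<and> sum P UNIV = 1"

definition joint :: "('x \<Rightarrow> real) \<Rightarrow> ('x \<Rightarrow> 'y \<Rightarrow> real) \<Rightarrow> ('x \<times> 'y \<Rightarrow> real)" where
  "joint PX W = (\<lambda>(a,b). PX a * W a b)"

definition marg_Y :: "('x::finite \<times> 'y \<Rightarrow> real) \<Rightarrow> ('y \<Rightarrow> real)" where
  "marg_Y Q = (\<lambda>b. \<Sum>a\<in>UNIV. Q (a,b))"

definition prod_dist :: "('x \<Rightarrow> real) \<Rightarrow> ('y \<Rightarrow> real) \<Rightarrow> ('x \<times> 'y \<Rightarrow> real)" where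
  "prod_dist P Q = (\<lambda>(a,b). P a * Q b)"

definition n_types :: "nat \<Rightarrow> ('a::finite \<Rightarrow> real) set" where
  "n_types n = {Q. (\<forall>a. Q a \<ge> 0) \<and> sum Q UNIV = 1 \<and>
                    (\<forall>a. \<exists>k::nat. Q a = real k / real n)}"

definition types_infty :: "('a::finite \<Rightarrow> real) set" where
  "types_infty = (\<Union>n\<in>{1..}. n_types n)"

definition tclass :: "nat \<Rightarrow> ('a \<Rightarrow> real) \<Rightarrow> 'a list set" where
  "tclass n q = {ys. length ys = n \<and> (\<forall>b. real (count_list ys b) = real n * q b)}"

definition cond_tclass :: "nat \<Rightarrow> ('x \<times> 'y \<Rightarrow> real) \<Rightarrow> 'y list \<Rightarrow> 'x list set" where
  "cond_tclass n Q ys = {xs. length xs = n \<and>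
      (\<forall>ab. real (count_list (zip xs ys) ab) = real n * Q ab)}"

text \<open>p_{Q_{X|Y}}(y^n) = P[X^n \<in> T_{Q_{X|Y}}(y^n)], X^n i.i.d. P_X; evaluated at a
  representative y^n of the type class of the Y-marginal (the value does not depend on
  the choice).\<close>
definition cond_type_prob :: "nat \<Rightarrow> ('x::finite \<Rightarrow> real) \<Rightarrow> ('x \<times> 'y::finite \<Rightarrow> real) \<Rightarrow> real" where
  "cond_type_prob n PX Q =
     (let ys = (SOME ys. ys \<in> tclass n (marg_Y Q))
      in \<Sum>xs\<in>cond_tclass n Q ys. prod_list (map PX xs))"

definition frakY :: "real \<Rightarrow> nat \<Rightarrow> ('x::finite \<Rightarrow> real) \<Rightarrow> ('x \<times> 'y::finite \<Rightarrow> real) \<Rightarrow> real" where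
  "frakY M n PX Q = min (2 * cond_type_prob n PX Q) (M powr (-1/2) * sqrt (cond_type_prob n PX Q))"

definition info_dens :: "('x \<Rightarrow> 'y \<Rightarrow> real) \<Rightarrow> 'x \<Rightarrow> 'y \<Rightarrow> ereal" where
  "info_dens W a b = (if W a b = 0 then \<infinity> else ereal (ln (1 / W a b)))"

text \<open>E[i(Ybar|Xbar)] for (Xbar,Ybar) ~ Q (convention 0 * \<infinity> = 0).\<close>
definition exp_info :: "('x \<Rightarrow> 'y \<Rightarrow> real) \<Rightarrow> ('x::finite \<times> 'y::finite \<Rightarrow> real) \<Rightarrow> ereal" where
  "exp_info W Q = (\<Sum>ab\<in>{ab. Q ab > 0}. ereal (Q ab) * info_dens W (fst ab) (snd ab))"

definition exp_neg :: "real \<Rightarrow> ereal \<Rightarrow> real" where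
  "exp_neg t e = (if e = \<infinity> then 0 else exp (- t * real_of_ereal e))"

definition rel_ent :: "('a::finite \<Rightarrow> real) \<Rightarrow> ('a \<Rightarrow> real) \<Rightarrow> ereal" where
  "rel_ent Q P = (\<Sum>a\<in>{a. Q a > 0}. if P a = 0 then \<infinity> else ereal (Q a * ln (Q a / P a)))"

end

theory Submission
  imports Defs "HOL-Library.FuncSet" "HOL-Real_Asymp.Real_Asymp"
begin

text \<open>Write k = n Q for the counts of an n-type Q of pairs and c for the counts of its
  Y-marginal. All factors of the weight of Q are explicit: the Y-type class has n! / prod c!
  elements, the conditional type class has prod c! / prod k! elements, each of probability
  prod PX(a)^(row sum of k), and the information density factor is prod W^k. Stirling's formula
  with a remainder in [0, 1 + ln n] therefore gives ln weight(Q) = - n objective(Q) + O(ln n)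
  uniformly in Q, where objective(Q) = D(Q || P_XY) + 1/2 [R - D(Q || P_X Q_Y)]_+; types that are
  not absolutely continuous with respect to P_XY have weight 0 and objective +infinity. Hence
  -1/n ln of the maximal weight is at least the infimum minus O(ln n / n), and at most the
  objective at n-types approaching any fixed type with the same support, along which the
  objective is continuous.\<close>

lemma count_list_zip_fst:
  assumes "length xs = length ys"
  shows "count_list xs a = (\<Sum>b\<in>(UNIV::'y::finite set). count_list (zip xs ys) (a, b))"
  using assms
proof (induction xs arbitrary: ys)
  case Nil
  then show ?case by simp
next
  case (Cons x xs)
  then obtain y ys' where ys: "ys = y # ys'" and len: "length xs = length ys'"
    by (cases ys) auto
  have "(\<Sum>b\<in>UNIV. count_list (zip (x # xs) ys) (a, b))
      = (\<Sum>b\<in>UNIV. count_list (zip xs ys') (a, b) + (if (x, y) = (a, b) then 1 else 0))"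
    by (auto simp: ys intro!: sum.cong)
  also have "\<dots> = count_list xs a + (if x = a then 1 else 0)"
    by (simp add: sum.distrib Cons.IH[OF len])
  finally show ?case by simp
qed

lemma prod_list_map_eq_prod_count:
  "prod_list (map f xs) = (\<Prod>a\<in>(UNIV::'a::finite set). (f a :: 'b::comm_monoid_mult) ^ count_list xs a)"
proof (induction xs)
  case Nil
  then show ?case by simp
next
  case (Cons x xs)
  have "(\<Prod>a\<in>UNIV. f a ^ count_list (x # xs) a)
      = (\<Prod>a\<in>UNIV. f a ^ count_list xs a * f a ^ (if x = a then 1 else 0))"
    by (intro prod.cong) (auto simp: power_add ac_simps)
  also have "\<dots> = (\<Prod>a\<in>UNIV. f a ^ count_list xs a) * f x"
    by (simp add: prod.distrib if_distrib[of "\<lambda>e. f _ ^ e"] prod.If_cases cong: if_cong)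
  finally show ?case by (simp add: Cons.IH ac_simps)
qed

definition joint_class :: "'y list \<Rightarrow> ('x \<times> 'y \<Rightarrow> nat) \<Rightarrow> 'x list set" where
  "joint_class ys k = {xs. length xs = length ys \<and> (\<forall>ab. count_list (zip xs ys) ab = k ab)}"

lemma finite_joint_class: "finite (joint_class ys (k :: 'x::finite \<times> 'y \<Rightarrow> nat))"
  by (rule finite_subset[OF _ finite_lists_length_eq[OF finite_UNIV, of "length ys"]])
    (auto simp: joint_class_def)

lemma joint_class_Cons:
  "joint_class (y # ys) k
    = (\<Union>a\<in>{a. k (a, y) > 0}. (#) a ` joint_class ys (k((a, y) := k (a, y) - 1)))"
proof (intro equalityI subsetI)
  fix xs
  assume "xs \<in> joint_class (y # ys) k"
  then obtain a xs' where xs: "xs = a # xs'" "length xs' = length ys"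
    and cnt_xs: "\<forall>ab. count_list (zip (a # xs') (y # ys)) ab = k ab"
    by (cases xs) (auto simp: joint_class_def)
  have cnt: "count_list (zip xs' ys) ab + (if (a, y) = ab then 1 else 0) = k ab" for ab
    using cnt_xs[rule_format, of ab] by (auto split: if_splits)
  have "k (a, y) > 0"
    using cnt[of "(a, y)"] by simp
  moreover have "count_list (zip xs' ys) ab = (k((a, y) := k (a, y) - 1)) ab" for ab
    using cnt[of ab] by (cases "ab = (a, y)") auto
  then have "xs' \<in> joint_class ys (k((a, y) := k (a, y) - 1))"
    using xs(2) by (simp add: joint_class_def)
  ultimately show "xs \<in> (\<Union>a\<in>{a. k (a, y) > 0}. (#) a ` joint_class ys (k((a, y) := k (a, y) - 1)))"
    using xs by auto
qed (auto simp: joint_class_def)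

lemma card_joint_class_mult_fact:
  fixes k :: "'x::finite \<times> 'y::finite \<Rightarrow> nat"
  assumes "\<And>b. (\<Sum>a\<in>UNIV. k (a, b)) = count_list ys b"
  shows "card (joint_class ys k) * (\<Prod>ab\<in>UNIV. fact (k ab)) = (\<Prod>b\<in>UNIV. fact (count_list ys b) :: nat)"
  using assms
proof (induction ys arbitrary: k)
  case Nil
  then have "k ab = 0" for ab
    by (cases ab) (metis count_list.simps(1) finite_UNIV sum_eq_0_iff UNIV_I)
  then have "k = (\<lambda>_. 0)"
    by auto
  moreover have "joint_class ([] :: 'y list) (\<lambda>_. 0) = ({[]} :: 'x list set)"
    by (auto simp: joint_class_def)
  ultimately show ?case
    by simp
next
  case (Cons y ys)
  define k' where "k' a = k((a, y) := k (a, y) - 1)" for a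
  define A where "A = {a. k (a, y) > 0}"
  define F where "F k'' = (\<Prod>ab\<in>UNIV. (fact (k'' ab) :: nat))" for k'' :: "'x \<times> 'y \<Rightarrow> nat"
  have F_split: "F k = k (a, y) * F (k' a)" if "a \<in> A" for a
  proof -
    have rest: "(\<Prod>ab\<in>UNIV - {(a, y)}. fact (k ab)) = (\<Prod>ab\<in>UNIV - {(a, y)}. (fact (k' a ab) :: nat))"
      by (intro prod.cong) (auto simp: k'_def)
    have "fact (k (a, y)) = k (a, y) * (fact (k' a (a, y)) :: nat)"
      using that by (simp add: A_def k'_def fact_num_eq_if)
    then show ?thesis
      unfolding F_def prod.remove[OF finite_UNIV UNIV_I, of _ "(a, y)"] rest by simp
  qed
  have IH: "card (joint_class ys (k' a)) * F (k' a) = (\<Prod>b\<in>UNIV. fact (count_list ys b))"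
    if "a \<in> A" for a
  proof -
    have "(\<Sum>a'\<in>UNIV - {a}. k' a (a', b)) = (\<Sum>a'\<in>UNIV - {a}. k (a', b))" for b
      by (intro sum.cong) (auto simp: k'_def)
    then have shifted: "(\<Sum>a'\<in>UNIV. k' a (a', b)) + (if b = y then 1 else 0) = (\<Sum>a'\<in>UNIV. k (a', b))"
      for b
      using that unfolding sum.remove[OF finite_UNIV UNIV_I, of _ a] by (auto simp: k'_def A_def)
    have "(\<Sum>a'\<in>UNIV. k' a (a', b)) = count_list ys b" for b
      using shifted[of b] Cons.prems[of b] by (simp split: if_splits)
    then show ?thesis
      unfolding F_def by (rule Cons.IH)
  qed
  have fact_Cons: "(\<Prod>b\<in>UNIV. fact (count_list (y # ys) b))
      = Suc (count_list ys y) * (\<Prod>b\<in>UNIV. (fact (count_list ys b) :: nat))"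
  proof -
    have "(\<Prod>b\<in>UNIV - {y}. fact (count_list (y # ys) b)) = (\<Prod>b\<in>UNIV - {y}. (fact (count_list ys b) :: nat))"
      by (intro prod.cong) auto
    then show ?thesis
      unfolding prod.remove[OF finite_UNIV UNIV_I, of _ y] by (simp add: algebra_simps)
  qed
  have "card (joint_class (y # ys) k) * F k = (\<Sum>a\<in>A. card (joint_class ys (k' a)) * F k)"
    unfolding joint_class_Cons k'_def[symmetric] A_def[symmetric]
    by (subst card_UN_disjoint) (auto simp: finite_joint_class card_image sum_distrib_right)
  also have "\<dots> = (\<Sum>a\<in>A. k (a, y)) * (\<Prod>b\<in>UNIV. fact (count_list ys b))"
    by (simp add: F_split IH[symmetric] sum_distrib_right ac_simps)
  also have "(\<Sum>a\<in>A. k (a, y)) = (\<Sum>a\<in>UNIV. k (a, y))"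
    by (rule sum.mono_neutral_left) (auto simp: A_def)
  also have "\<dots> * (\<Prod>b\<in>UNIV. fact (count_list ys b)) = (\<Prod>b\<in>UNIV. fact (count_list (y # ys) b))"
    unfolding fact_Cons using Cons.prems[of y] by simp
  finally show ?case
    by (simp add: F_def)
qed

lemma card_type_class_mult_fact:
  fixes c :: "'y::finite \<Rightarrow> nat"
  assumes "(\<Sum>b\<in>UNIV. c b) = n"
  shows "card {ys. length ys = n \<and> (\<forall>b. count_list ys b = c b)} * (\<Prod>b\<in>UNIV. fact (c b))
         = (fact n :: nat)"
proof -
  \<comment> \<open>a type class is a joint class with respect to the constant sequence over unit\<close>
  define us where "us = replicate n ()"
  have count_zip: "count_list (zip xs us) (b, u) = count_list xs b" if "length xs = n" for xs b u
    using count_list_zip_fst[of xs us b] that by (simp add: us_def UNIV_unit)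
  have len_us: "length us = n"
    by (simp add: us_def)
  have "(\<forall>bu. count_list (zip xs us) bu = c (fst bu)) \<longleftrightarrow> (\<forall>b. count_list xs b = c b)"
    if "length xs = n" for xs
    using count_zip[OF that] by auto
  then have "joint_class us (\<lambda>bu. c (fst bu)) = {ys. length ys = n \<and> (\<forall>b. count_list ys b = c b)}"
    by (auto simp: joint_class_def len_us)
  moreover have "(\<Prod>bu\<in>(UNIV :: ('y \<times> unit) set). fact (c (fst bu))) = (\<Prod>b\<in>UNIV. (fact (c b) :: nat))"
  proof -
    have "(\<Prod>bu\<in>range (\<lambda>b::'y. (b, ())). fact (c (fst bu))) = (\<Prod>b\<in>UNIV. (fact (c b) :: nat))"
      by (subst prod.reindex) (auto simp: inj_on_def)
    moreover have "range (\<lambda>b::'y. (b, ())) = UNIV"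
      by auto
    ultimately show ?thesis
      by (simp only:)
  qed
  moreover have "(\<Prod>u\<in>UNIV. fact (count_list us u)) = (fact n :: nat)"
    by (simp add: us_def UNIV_unit count_list_eq_length_filter)
  moreover have "(\<Sum>b\<in>UNIV. c (fst (b, u))) = count_list us u" for u
    using assms by (simp add: us_def count_list_eq_length_filter)
  ultimately show ?thesis
    using card_joint_class_mult_fact[of "\<lambda>bu. c (fst bu)" us] by simp
qed

lemma ln_fact_bounds:
  fixes m :: nat
  assumes "m \<ge> 1"
  shows "real m * ln m - m + 1 \<le> ln (fact m) \<and> ln (fact m) \<le> (real m + 1) * ln m - m + 1"
  using assms
proof (induction m rule: nat_induct_at_least)
  case base
  then show ?case by simp
next
  case (Suc m)
  have m_pos: "real m > 0"
    using Suc.hyps by simp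
  have "ln ((real m + 1) / m) \<le> (real m + 1) / m - 1"
    using m_pos by (intro ln_le_minus_one) simp
  then have upper: "real m * (ln (real m + 1) - ln m) \<le> 1"
    using m_pos by (simp add: ln_div field_simps)
  have "ln (real m / (m + 1)) \<le> real m / (m + 1) - 1"
    using m_pos by (intro ln_le_minus_one) simp
  then have lower: "(real m + 1) * (ln (real m + 1) - ln m) \<ge> 1"
    using m_pos by (simp add: ln_div field_simps)
  have "ln (fact (Suc m)) = ln (real m + 1) + ln (fact m)"
    by (simp add: ln_mult add.commute)
  then show ?case
    using Suc.IH upper lower by (simp add: algebra_simps)
qed

definition stirling_rem :: "nat \<Rightarrow> real" where
  "stirling_rem m = ln (fact m) - (real m * ln m - m)"

lemma ln_fact_eq_stirling: "ln (fact m) = real m * ln m - m + stirling_rem m"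
  by (simp add: stirling_rem_def)

lemma stirling_rem_bounds:
  fixes m n :: nat
  assumes "m \<le> n" and "n \<ge> 1"
  shows "0 \<le> stirling_rem m \<and> stirling_rem m \<le> 1 + ln n"
proof (cases "m = 0")
  case True
  then show ?thesis
    using assms by (simp add: stirling_rem_def)
next
  case False
  then have "ln m \<le> ln n"
    using assms by simp
  then show ?thesis
    using ln_fact_bounds[of m] False by (simp add: stirling_rem_def algebra_simps)
qed

lemma sum_stirling_rem_bounds:
  fixes k :: "'a::finite \<Rightarrow> nat" and n :: nat
  assumes "\<And>z. k z \<le> n" and "n \<ge> 1"
  shows "0 \<le> (\<Sum>z\<in>UNIV. stirling_rem (k z))
    \<and> (\<Sum>z\<in>UNIV. stirling_rem (k z)) \<le> real (card (UNIV :: 'a set)) * (1 + ln n)"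
  using stirling_rem_bounds[OF assms(1) assms(2)]
    sum_bounded_above[of UNIV "\<lambda>z. stirling_rem (k z)" "1 + ln n"]
  by (auto intro: sum_nonneg)

definition entropy :: "('a::finite \<Rightarrow> real) \<Rightarrow> real" where
  "entropy Q = - (\<Sum>z\<in>UNIV. Q z * ln (Q z))"

text \<open>No positivity hypothesis is needed: terms with k z = 0 vanish on both sides since
  0 * ln 0 = 0.\<close>

lemma sum_ln_fact_counts:
  fixes Q :: "'a::finite \<Rightarrow> real"
  assumes counts: "\<And>z. real (k z) = real n * Q z" and sum_Q: "sum Q UNIV = 1"
  shows "(\<Sum>z\<in>UNIV. ln (fact (k z)))
         = real n * ln n - real n - real n * entropy Q + (\<Sum>z\<in>UNIV. stirling_rem (k z))"
proof -
  have term_eq: "ln (fact (k z)) = real n * (Q z * ln n) - real n * Q z + real n * (Q z * ln (Q z))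
      + stirling_rem (k z)" for z
  proof (cases "k z = 0")
    case True
    then show ?thesis
      using counts[of z] by (auto simp: stirling_rem_def)
  next
    case False
    then have "real n * Q z > 0"
      using counts[of z] by (metis of_nat_0_less_iff gr0I)
    then have "real n > 0" "Q z > 0"
      using zero_less_mult_iff[of "real n" "Q z"] by auto
    then have "real (k z) * ln (k z) = real n * (Q z * ln n) + real n * (Q z * ln (Q z))"
      by (simp add: counts ln_mult algebra_simps)
    then show ?thesis
      by (simp add: stirling_rem_def counts)
  qed
  show ?thesis
    unfolding term_eq entropy_def sum.distrib sum_subtractf
    by (simp add: sum_Q flip: sum_distrib_left sum_distrib_right)
qed

lemma is_dist_exists_pos:
  assumes "is_dist P"
  obtains a where "P a > 0"
proof -
  have "\<exists>a. P a > 0"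
  proof (rule ccontr)
    assume "\<not> (\<exists>a. P a > 0)"
    then have "P a = 0" for a
      using assms by (simp add: is_dist_def not_less order_antisym)
    then show False
      using assms by (simp add: is_dist_def)
  qed
  then show ?thesis
    using that by blast
qed

lemma n_typesD:
  assumes "Q \<in> n_types n"
  shows "Q z \<ge> 0" and "sum Q UNIV = 1"
  using assms by (simp_all add: n_types_def)

lemma n_types_zero: "n_types 0 = {}"
proof -
  have "sum Q UNIV = 0" if "\<forall>z. \<exists>k::nat. Q z = real k / real 0" for Q :: "'a \<Rightarrow> real"
    using that by (simp add: sum.neutral)
  then show ?thesis
    by (auto simp: n_types_def)
qed

lemma n_types_pos: "Q \<in> n_types n \<Longrightarrow> n \<ge> 1"
  using n_types_zero by (cases n) auto

lemma n_types_counts: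
  assumes "Q \<in> n_types n"
  obtains k where "\<And>z. real (k z) = real n * Q z"
proof -
  have "\<forall>z. \<exists>k::nat. Q z = real k / real n"
    using assms by (simp add: n_types_def)
  then obtain k where "\<And>z. Q z = real (k z) / real n"
    by metis
  moreover have "n \<noteq> 0"
    using n_types_pos[OF assms] by simp
  ultimately show ?thesis
    using that by simp
qed

lemma sum_counts:
  assumes "\<And>z. real (k z) = real n * Q z" and "sum Q UNIV = 1"
  shows "sum k UNIV = n"
proof -
  have "real (sum k UNIV) = real n * sum Q UNIV"
    by (simp add: assms(1) sum_distrib_left)
  then have "real (sum k UNIV) = real n"
    using assms(2) by simp
  then show ?thesis
    by (simp only: of_nat_eq_iff)
qed

lemma marg_Y_counts:
  assumes "\<And>z. real (k z) = real n * Q z"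
  shows "real (\<Sum>a\<in>UNIV. k (a, b)) = real n * marg_Y Q b"
  by (simp add: assms marg_Y_def sum_distrib_left)

lemma sum_UNIV_pairs: "(\<Sum>a\<in>UNIV. \<Sum>b\<in>UNIV. f (a, b)) = (sum f UNIV :: 'c::comm_monoid_add)"
  by (simp add: sum.cartesian_product)

lemma sum_UNIV_pairs_swapped:
  "(\<Sum>b\<in>UNIV. \<Sum>a\<in>UNIV. f (a, b)) = (sum f UNIV :: 'c::comm_monoid_add)"
  by (subst sum.swap) (rule sum_UNIV_pairs)

lemma sum_marg_Y: "sum (marg_Y Q) UNIV = sum Q UNIV"
  unfolding marg_Y_def by (rule sum_UNIV_pairs_swapped)

lemma n_types_finite: "finite (n_types n :: ('a::finite \<Rightarrow> real) set)"
proof -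
  define B where "B = (\<lambda>k. real k / real n) ` {..n}"
  have "n_types n \<subseteq> Pi\<^sub>E UNIV (\<lambda>_::'a. B)"
  proof
    fix Q :: "'a \<Rightarrow> real"
    assume Q: "Q \<in> n_types n"
    obtain k where k: "\<And>z. real (k z) = real n * Q z"
      using n_types_counts[OF Q] by metis
    have sum_k: "sum k UNIV = n"
      using Q by (intro sum_counts[OF k]) (simp add: n_types_def)
    have "Q a \<in> B" for a
    proof -
      have "n \<noteq> 0"
        using n_types_pos[OF Q] by simp
      then have "Q a = real (k a) / real n"
        by (simp add: k)
      moreover have "k a \<le> n"
        using member_le_sum[of a UNIV k] sum_k by simp
      ultimately show ?thesis
        by (auto simp: B_def)
    qed
    then show "Q \<in> Pi\<^sub>E UNIV (\<lambda>_. B)"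
      by (simp add: PiE_UNIV_domain)
  qed
  moreover have "finite (Pi\<^sub>E UNIV (\<lambda>_::'a. B))"
    by (rule finite_PiE) (auto simp: B_def)
  ultimately show ?thesis
    by (rule finite_subset)
qed

lemma indicator_in_n_types:
  assumes "n \<ge> 1"
  shows "(\<lambda>z. if z = z0 then 1 else 0) \<in> n_types n"
proof -
  have "\<exists>k::nat. (if z = z0 then 1 else 0) = real k / real n" for z
    using assms by (cases "z = z0") (auto intro!: exI[of _ n] exI[of _ 0])
  then show ?thesis
    by (simp add: n_types_def)
qed

lemma tclass_marg_Y_eq:
  assumes "\<And>z. real (k z) = real n * Q z"
  shows "tclass n (marg_Y Q) = {ys. length ys = n \<and> (\<forall>b. count_list ys b = (\<Sum>a\<in>UNIV. k (a, b)))}"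
  unfolding tclass_def marg_Y_counts[OF assms, symmetric] by (simp only: of_nat_eq_iff)

lemma card_tclass_marg_Y:
  fixes Q :: "'x::finite \<times> 'y::finite \<Rightarrow> real"
  assumes counts: "\<And>z. real (k z) = real n * Q z" and sum_Q: "sum Q UNIV = 1"
  shows "card (tclass n (marg_Y Q)) * (\<Prod>b\<in>UNIV. fact (\<Sum>a\<in>UNIV. k (a, b))) = (fact n :: nat)"
proof -
  have "(\<Sum>b\<in>UNIV. \<Sum>a\<in>UNIV. k (a, b)) = n"
    using sum_counts[OF counts sum_Q] by (simp add: sum_UNIV_pairs_swapped)
  then show ?thesis
    unfolding tclass_marg_Y_eq[OF counts] by (rule card_type_class_mult_fact)
qed

lemma cond_type_prob_eq:
  fixes Q :: "'x::finite \<times> 'y::finite \<Rightarrow> real"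
  assumes counts: "\<And>z. real (k z) = real n * Q z" and sum_Q: "sum Q UNIV = 1"
  shows "cond_type_prob n PX Q
    = (\<Prod>b\<in>UNIV. fact (\<Sum>a\<in>UNIV. k (a, b))) / (\<Prod>z\<in>UNIV. fact (k z))
      * (\<Prod>a\<in>UNIV. PX a ^ (\<Sum>b\<in>UNIV. k (a, b)))"
proof -
  define ys where "ys = (SOME ys. ys \<in> tclass n (marg_Y Q))"
  have "tclass n (marg_Y Q) \<noteq> {}"
    using card_tclass_marg_Y[OF counts sum_Q] by (metis card.empty fact_nonzero mult_is_0)
  then have "ys \<in> tclass n (marg_Y Q)"
    unfolding ys_def by (simp add: some_in_eq)
  then have len_ys: "length ys = n" and count_ys: "\<And>b. count_list ys b = (\<Sum>a\<in>UNIV. k (a, b))"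
    unfolding tclass_marg_Y_eq[OF counts] by auto
  define C where "C = joint_class ys k"
  have card_C_nat: "card C * (\<Prod>z\<in>UNIV. fact (k z)) = (\<Prod>b\<in>UNIV. fact (\<Sum>a\<in>UNIV. k (a, b)) :: nat)"
    unfolding C_def count_ys[symmetric] by (rule card_joint_class_mult_fact) (simp add: count_ys)
  have "real (card C) * (\<Prod>z\<in>UNIV. fact (k z)) = (\<Prod>b\<in>UNIV. fact (\<Sum>a\<in>UNIV. k (a, b)))"
    using arg_cong[OF card_C_nat, of real] by (simp add: of_nat_prod)
  then have card_C: "real (card C) = (\<Prod>b\<in>UNIV. fact (\<Sum>a\<in>UNIV. k (a, b))) / (\<Prod>z\<in>UNIV. fact (k z))"
    by (simp add: field_simps)
  have "count_list xs a = (\<Sum>b\<in>UNIV. k (a, b))" if "xs \<in> C" for xs a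
    using that count_list_zip_fst[of xs ys a] by (simp add: C_def joint_class_def)
  then have "(\<Sum>xs\<in>C. prod_list (map PX xs)) = real (card C) * (\<Prod>a\<in>UNIV. PX a ^ (\<Sum>b\<in>UNIV. k (a, b)))"
    by (simp add: prod_list_map_eq_prod_count)
  moreover have "cond_tclass n Q ys = C"
    unfolding cond_tclass_def C_def joint_class_def len_ys counts[symmetric] by (simp only: of_nat_eq_iff)
  ultimately show ?thesis
    unfolding cond_type_prob_def ys_def[symmetric] card_C by simp
qed

lemma ln_card_tclass_marg_Y:
  fixes Q :: "'x::finite \<times> 'y::finite \<Rightarrow> real"
  assumes counts: "\<And>z. real (k z) = real n * Q z" and sum_Q: "sum Q UNIV = 1"
  shows "card (tclass n (marg_Y Q)) > 0"
    and "ln (card (tclass n (marg_Y Q)))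
    = real n * entropy (marg_Y Q) + stirling_rem n - (\<Sum>b\<in>UNIV. stirling_rem (\<Sum>a\<in>UNIV. k (a, b)))"
proof -
  define c where "c b = (\<Sum>a\<in>UNIV. k (a, b))" for b
  have card_eq: "card (tclass n (marg_Y Q)) * (\<Prod>b\<in>UNIV. fact (c b)) = (fact n :: nat)"
    using card_tclass_marg_Y[OF counts sum_Q] by (simp add: c_def)
  then show card_pos: "card (tclass n (marg_Y Q)) > 0"
    by (metis fact_nonzero gr0I mult_is_0)
  have "ln (fact n) = ln (real (card (tclass n (marg_Y Q))) * (\<Prod>b\<in>UNIV. fact (c b)))"
    using arg_cong[OF card_eq, of real] by (simp add: of_nat_prod)
  also have "\<dots> = ln (card (tclass n (marg_Y Q))) + ln (\<Prod>b\<in>UNIV. fact (c b))"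
    using card_pos by (simp add: ln_mult prod_pos)
  also have "ln (\<Prod>b\<in>UNIV. fact (c b) :: real) = (\<Sum>b\<in>UNIV. ln (fact (c b)))"
    by (simp add: ln_prod)
  finally have "ln (card (tclass n (marg_Y Q))) + (\<Sum>b\<in>UNIV. ln (fact (c b))) = ln (fact n)"
    by simp
  moreover have "(\<Sum>b\<in>UNIV. ln (fact (c b)))
      = real n * ln n - real n - real n * entropy (marg_Y Q) + (\<Sum>b\<in>UNIV. stirling_rem (c b))"
  proof (rule sum_ln_fact_counts)
    show "real (c b) = real n * marg_Y Q b" for b
      unfolding c_def by (rule marg_Y_counts[of k n Q]) (rule counts)
  qed (simp add: sum_marg_Y sum_Q)
  ultimately show "ln (card (tclass n (marg_Y Q)))
    = real n * entropy (marg_Y Q) + stirling_rem n - (\<Sum>b\<in>UNIV. stirling_rem (\<Sum>a\<in>UNIV. k (a, b)))"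
    by (simp add: ln_fact_eq_stirling c_def)
qed

lemma ln_cond_type_prob:
  fixes Q :: "'x::finite \<times> 'y::finite \<Rightarrow> real"
  assumes counts: "\<And>z. real (k z) = real n * Q z" and sum_Q: "sum Q UNIV = 1"
    and PX_pos: "\<And>z. Q z > 0 \<Longrightarrow> PX (fst z) > 0"
  shows "cond_type_prob n PX Q > 0"
    and "ln (cond_type_prob n PX Q)
      = real n * (entropy Q - entropy (marg_Y Q) + (\<Sum>z\<in>UNIV. Q z * ln (PX (fst z))))
        + (\<Sum>b\<in>UNIV. stirling_rem (\<Sum>a\<in>UNIV. k (a, b))) - (\<Sum>z\<in>UNIV. stirling_rem (k z))"
proof -
  define d where "d a = (\<Sum>b\<in>UNIV. k (a, b))" for a
  have PX_pow_pos: "PX a ^ d a > 0" for a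
  proof (cases "d a = 0")
    case False
    then obtain b where "k (a, b) > 0"
      by (auto simp: d_def)
    then have "Q (a, b) > 0"
      using counts[of "(a, b)"] by (metis of_nat_0_less_iff zero_less_mult_iff of_nat_less_0_iff)
    then show ?thesis
      using PX_pos[of "(a, b)"] by simp
  qed simp
  have ln_PX_pow: "ln (PX a ^ d a) = real (d a) * ln (PX a)" for a
    using PX_pow_pos[of a] by (cases "d a = 0") (auto simp: ln_realpow)
  have "(\<Sum>a\<in>UNIV. ln (PX a ^ d a)) = (\<Sum>a\<in>UNIV. real (d a) * ln (PX a))"
    by (simp only: ln_PX_pow)
  also have "\<dots> = (\<Sum>a\<in>UNIV. \<Sum>b\<in>UNIV. real (k (a, b)) * ln (PX a))"
    by (simp add: d_def sum_distrib_right)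
  also have "\<dots> = (\<Sum>z\<in>UNIV. real (k z) * ln (PX (fst z)))"
    using sum_UNIV_pairs[of "\<lambda>z. real (k z) * ln (PX (fst z))"] by simp
  also have "\<dots> = real n * (\<Sum>z\<in>UNIV. Q z * ln (PX (fst z)))"
    by (simp add: counts sum_distrib_left mult.assoc)
  finally have sum_ln_PX: "(\<Sum>a\<in>UNIV. ln (PX a ^ d a)) = \<dots>" .
  have k_eq: "(\<Sum>z\<in>UNIV. ln (fact (k z)))
      = real n * ln n - real n - real n * entropy Q + (\<Sum>z\<in>UNIV. stirling_rem (k z))"
    by (rule sum_ln_fact_counts[OF counts sum_Q])
  have c_eq: "(\<Sum>b\<in>UNIV. ln (fact (\<Sum>a\<in>UNIV. k (a, b))))
      = real n * ln n - real n - real n * entropy (marg_Y Q) + (\<Sum>b\<in>UNIV. stirling_rem (\<Sum>a\<in>UNIV. k (a, b)))"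
  proof (rule sum_ln_fact_counts)
    show "real (\<Sum>a\<in>UNIV. k (a, b)) = real n * marg_Y Q b" for b
      by (rule marg_Y_counts[of k n Q]) (rule counts)
  qed (simp add: sum_marg_Y sum_Q)
  have prob_eq: "cond_type_prob n PX Q
      = (\<Prod>b\<in>UNIV. fact (\<Sum>a\<in>UNIV. k (a, b))) / (\<Prod>z\<in>UNIV. fact (k z)) * (\<Prod>a\<in>UNIV. PX a ^ d a)"
    unfolding d_def by (rule cond_type_prob_eq[OF counts sum_Q])
  show "cond_type_prob n PX Q > 0"
    unfolding prob_eq using PX_pow_pos by (simp add: prod_pos)
  show "ln (cond_type_prob n PX Q) = real n * (entropy Q - entropy (marg_Y Q) + (\<Sum>z\<in>UNIV. Q z * ln (PX (fst z))))
        + (\<Sum>b\<in>UNIV. stirling_rem (\<Sum>a\<in>UNIV. k (a, b))) - (\<Sum>z\<in>UNIV. stirling_rem (k z))"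
  proof -
    define P where "P = (\<Prod>a\<in>UNIV. PX a ^ d a)"
    have "ln P = (\<Sum>a\<in>UNIV. ln (PX a ^ d a))"
      unfolding P_def by (rule ln_prod[OF finite_UNIV]) (metis PX_pow_pos less_irrefl)
    moreover have "P > 0"
      unfolding P_def using PX_pow_pos by (simp add: prod_pos)
    ultimately show ?thesis
      unfolding prob_eq P_def[symmetric]
      by (simp add: ln_mult ln_div prod_pos ln_prod sum_ln_PX k_eq c_eq algebra_simps)
  qed
qed

definition abs_cont :: "('a \<Rightarrow> real) \<Rightarrow> ('a \<Rightarrow> real) \<Rightarrow> bool" where
  "abs_cont Q P \<longleftrightarrow> (\<forall>z. Q z > 0 \<longrightarrow> P z > 0)"

definition kl_div :: "('a::finite \<Rightarrow> real) \<Rightarrow> ('a \<Rightarrow> real) \<Rightarrow> real" where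
  "kl_div Q P = (\<Sum>z\<in>{z. Q z > 0}. Q z * ln (Q z / P z))"

lemma rel_ent_eq_kl_div:
  assumes "abs_cont Q P"
  shows "rel_ent Q P = ereal (kl_div Q P)"
  unfolding rel_ent_def kl_div_def sum_ereal[symmetric]
  using assms by (intro sum.cong) (auto simp: abs_cont_def)

lemma rel_ent_infinite:
  assumes "\<not> abs_cont Q P" and "\<And>z. P z \<ge> 0"
  shows "rel_ent Q P = \<infinity>"
proof -
  obtain z where "Q z > 0" "P z = 0"
    using assms by (metis abs_cont_def order_less_le)
  then show ?thesis
    unfolding rel_ent_def sum_Pinfty by (intro conjI) (auto intro!: bexI[of _ z])
qed

lemma kl_div_eq_sum_UNIV:
  assumes "\<And>z. Q z \<ge> 0"
  shows "kl_div Q P = (\<Sum>z\<in>UNIV. Q z * ln (Q z / P z))"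
  unfolding kl_div_def using assms
  by (intro sum.mono_neutral_left) (auto simp: order_less_le)

lemma joint_pos_iff:
  assumes "is_dist PX" and "\<And>a. is_dist (W a)"
  shows "joint PX W z > 0 \<longleftrightarrow> PX (fst z) > 0 \<and> W (fst z) (snd z) > 0"
  using assms by (cases z) (auto simp: joint_def is_dist_def zero_less_mult_iff order_less_le)

lemma abs_cont_joint_pos:
  assumes "is_dist PX" and "\<And>a. is_dist (W a)" and "abs_cont Q (joint PX W)" and "Q z > 0"
  shows "PX (fst z) > 0" and "W (fst z) (snd z) > 0"
proof -
  have "joint PX W z > 0"
    using assms(3,4) unfolding abs_cont_def by blast
  then show "PX (fst z) > 0" and "W (fst z) (snd z) > 0"
    using joint_pos_iff[of PX W z] assms(1,2) by blast+
qed

lemma marg_Y_pos: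
  assumes "\<And>z. Q z \<ge> 0" and "Q z > 0"
  shows "marg_Y Q (snd z) > 0"
  using member_le_sum[of "fst z" UNIV "\<lambda>a. Q (a, snd z)"] assms by (simp add: marg_Y_def)

lemma sum_mult_ln_marg_Y:
  "(\<Sum>z\<in>UNIV. Q z * ln (marg_Y Q (snd z))) = (\<Sum>b\<in>UNIV. marg_Y Q b * ln (marg_Y Q b))"
  by (simp add: sum_UNIV_pairs_swapped[symmetric] marg_Y_def sum_distrib_right)

lemma kl_div_joint:
  assumes "is_dist PX" and "\<And>a. is_dist (W a)" and "\<And>z. Q z \<ge> 0"
    and "abs_cont Q (joint PX W)"
  shows "kl_div Q (joint PX W)
    = - entropy Q - (\<Sum>z\<in>UNIV. Q z * ln (PX (fst z))) - (\<Sum>z\<in>UNIV. Q z * ln (W (fst z) (snd z)))"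
proof -
  have "Q z * ln (Q z / joint PX W z)
      = Q z * ln (Q z) - Q z * ln (PX (fst z)) - Q z * ln (W (fst z) (snd z))" for z
  proof (cases "Q z > 0")
    case True
    then have "PX (fst z) > 0" "W (fst z) (snd z) > 0"
      using abs_cont_joint_pos[OF assms(1,2,4) True] by auto
    then show ?thesis
      using True by (cases z) (simp add: joint_def ln_div ln_mult algebra_simps)
  next
    case False
    then show ?thesis
      using assms(3)[of z] by simp
  qed
  then show ?thesis
    unfolding kl_div_eq_sum_UNIV[OF assms(3)] entropy_def by (simp add: sum_subtractf)
qed

lemma kl_div_prod_marg_Y:
  assumes "\<And>z. Q z \<ge> 0" and "\<And>z. Q z > 0 \<Longrightarrow> PX (fst z) > 0"
  shows "kl_div Q (prod_dist PX (marg_Y Q))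
    = - entropy Q - (\<Sum>z\<in>UNIV. Q z * ln (PX (fst z))) + entropy (marg_Y Q)"
proof -
  have "Q z * ln (Q z / prod_dist PX (marg_Y Q) z)
      = Q z * ln (Q z) - Q z * ln (PX (fst z)) - Q z * ln (marg_Y Q (snd z))" for z
  proof (cases "Q z > 0")
    case True
    then have "PX (fst z) > 0" "marg_Y Q (snd z) > 0"
      using assms(1) assms(2)[OF True] marg_Y_pos[of Q z] True by auto
    then show ?thesis
      using True by (cases z) (simp add: prod_dist_def ln_div ln_mult algebra_simps)
  next
    case False
    then show ?thesis
      using assms(1)[of z] by simp
  qed
  then show ?thesis
    unfolding kl_div_eq_sum_UNIV[OF assms(1)] entropy_def
    by (simp add: sum_subtractf sum_mult_ln_marg_Y)
qed

lemma exp_info_eq: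
  assumes "is_dist PX" and "\<And>a. is_dist (W a)" and "\<And>z. Q z \<ge> 0"
    and "abs_cont Q (joint PX W)"
  shows "exp_info W Q = ereal (- (\<Sum>z\<in>UNIV. Q z * ln (W (fst z) (snd z))))"
proof -
  have W_pos: "W (fst z) (snd z) > 0" if "Q z > 0" for z
    using abs_cont_joint_pos(2)[OF assms(1,2,4) that] .
  have "exp_info W Q = ereal (\<Sum>z\<in>{z. Q z > 0}. - (Q z * ln (W (fst z) (snd z))))"
    unfolding exp_info_def sum_ereal[symmetric]
    using W_pos by (intro sum.cong) (auto simp: info_dens_def ln_div order_less_le)
  also have "(\<Sum>z\<in>{z. Q z > 0}. - (Q z * ln (W (fst z) (snd z)))) = - (\<Sum>z\<in>UNIV. Q z * ln (W (fst z) (snd z)))"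
    using assms(3) by (subst sum.mono_neutral_left[of UNIV]) (auto simp: sum_negf order_less_le)
  finally show ?thesis .
qed

definition objective :: "('x::finite \<Rightarrow> real) \<Rightarrow> ('x \<Rightarrow> 'y::finite \<Rightarrow> real) \<Rightarrow> real \<Rightarrow> ('x \<times> 'y \<Rightarrow> real) \<Rightarrow> real" where
  "objective PX W R Q = kl_div Q (joint PX W) + 1/2 * max 0 (R - kl_div Q (prod_dist PX (marg_Y Q)))"

lemma abs_cont_prod_marg_Y:
  assumes "is_dist PX" and "\<And>a. is_dist (W a)" and "\<And>z. Q z \<ge> 0"
    and "abs_cont Q (joint PX W)"
  shows "abs_cont Q (prod_dist PX (marg_Y Q))"
  unfolding abs_cont_def
proof (intro allI impI)
  fix z
  assume "Q z > 0"
  then have "PX (fst z) > 0" and "marg_Y Q (snd z) > 0"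
    using abs_cont_joint_pos(1)[OF assms(1,2,4)] marg_Y_pos[of Q z] assms(3) by auto
  then show "prod_dist PX (marg_Y Q) z > 0"
    by (cases z) (simp add: prod_dist_def)
qed

lemma objective_ereal:
  assumes "is_dist PX" and "\<And>a. is_dist (W a)" and Q_nonneg: "\<And>z. Q z \<ge> 0"
    and cont: "abs_cont Q (joint PX W)"
  shows "rel_ent Q (joint PX W) + ereal (1/2) * max 0 (ereal R - rel_ent Q (prod_dist PX (marg_Y Q)))
    = ereal (objective PX W R Q)"
proof -
  have cont_prod: "abs_cont Q (prod_dist PX (marg_Y Q))"
    by (rule abs_cont_prod_marg_Y[OF assms])
  show ?thesis
    unfolding objective_def rel_ent_eq_kl_div[OF cont] rel_ent_eq_kl_div[OF cont_prod]
    by (cases "R \<ge> kl_div Q (prod_dist PX (marg_Y Q))") (auto simp: max_def)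
qed

lemma objective_infinite:
  assumes "is_dist PX" and "\<And>a. is_dist (W a)" and "\<not> abs_cont Q (joint PX W)"
  shows "rel_ent Q (joint PX W) + ereal (1/2) * max 0 (ereal R - rel_ent Q (prod_dist PX (marg_Y Q))) = \<infinity>"
proof -
  have "joint PX W z \<ge> 0" for z
    using assms(1,2) by (cases z) (simp add: joint_def is_dist_def)
  then have "rel_ent Q (joint PX W) = \<infinity>"
    by (rule rel_ent_infinite[OF assms(3)])
  moreover have "ereal (1/2) * max 0 (ereal R - rel_ent Q (prod_dist PX (marg_Y Q))) \<ge> 0"
    by (intro ereal_0_le_mult) auto
  ultimately show ?thesis
    by simp
qed

definition type_weight :: "('x::finite \<Rightarrow> real) \<Rightarrow> ('x \<Rightarrow> 'y::finite \<Rightarrow> real) \<Rightarrow> real \<Rightarrow> nat \<Rightarrow> ('x \<times> 'y \<Rightarrow> real) \<Rightarrow> real" where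
  "type_weight PX W R n Q = 1/2 * real (card (tclass n (marg_Y Q)))
     * exp_neg (real n) (exp_info W Q) * frakY (exp (real n * R)) n PX Q"

lemma type_weight_zero:
  assumes "is_dist PX" and "\<And>a. is_dist (W a)" and Q: "Q \<in> n_types n"
    and "\<not> abs_cont Q (joint PX W)"
  shows "type_weight PX W R n Q = 0"
proof -
  obtain a b where Q_pos: "Q (a, b) > 0" and "\<not> joint PX W (a, b) > 0"
    using assms(4) unfolding abs_cont_def by auto
  moreover have "PX a \<ge> 0" "W a b \<ge> 0"
    using assms(1,2) by (simp_all add: is_dist_def)
  ultimately have "PX a = 0 \<or> W a b = 0"
    using joint_pos_iff[of PX W "(a, b)"] assms(1,2) by auto
  then consider "W a b = 0" | "PX a = 0"
    by blast
  then show ?thesis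
  proof cases
    case 1
    have "exp_info W Q = \<infinity>"
      unfolding exp_info_def sum_Pinfty
      using Q_pos 1 by (intro conjI) (auto intro!: bexI[of _ "(a, b)"] simp: info_dens_def)
    then show ?thesis
      by (simp add: type_weight_def exp_neg_def)
  next
    case 2
    obtain k where counts: "\<And>z. real (k z) = real n * Q z"
      using n_types_counts[OF Q] by metis
    have sum_Q: "sum Q UNIV = 1"
      using Q by (simp add: n_types_def)
    have "n \<noteq> 0"
      using n_types_pos[OF Q] by simp
    then have "real (k (a, b)) > 0"
      using counts[of "(a, b)"] Q_pos by simp
    then have "k (a, b) > 0"
      by simp
    then have "(\<Sum>b\<in>UNIV. k (a, b)) > 0"
      using member_le_sum[of b UNIV "\<lambda>b. k (a, b)"] by simp
    then have "(\<Prod>a\<in>UNIV. PX a ^ (\<Sum>b\<in>UNIV. k (a, b))) = 0"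
      using 2 by (intro prod_zero) auto
    then have "cond_type_prob n PX Q = 0"
      using cond_type_prob_eq[OF counts sum_Q, of PX] by simp
    then show ?thesis
      by (simp add: type_weight_def frakY_def)
  qed
qed

lemma ln_min:
  fixes a b :: real
  assumes "a > 0" and "b > 0"
  shows "ln (min a b) = min (ln a) (ln b)"
  using assms by (simp add: min_def)

lemma ln_type_weight_factors:
  fixes PX :: "'x::finite \<Rightarrow> real" and W :: "'x \<Rightarrow> 'y::finite \<Rightarrow> real"
  assumes PX: "is_dist PX" and W: "\<And>a. is_dist (W a)"
    and counts: "\<And>z. real (k z) = real n * Q z" and sum_Q: "sum Q UNIV = 1" and Q_nonneg: "\<And>z. Q z \<ge> 0"
    and cont: "abs_cont Q (joint PX W)"
  shows "ln (card (tclass n (marg_Y Q))) + real n * (\<Sum>z\<in>UNIV. Q z * ln (W (fst z) (snd z)))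
      + ln (cond_type_prob n PX Q)
      = - (real n * kl_div Q (joint PX W)) + stirling_rem n - (\<Sum>z\<in>UNIV. stirling_rem (k z))"
    and "ln (cond_type_prob n PX Q) = - (real n * kl_div Q (prod_dist PX (marg_Y Q)))
      + (\<Sum>b\<in>UNIV. stirling_rem (\<Sum>a\<in>UNIV. k (a, b))) - (\<Sum>z\<in>UNIV. stirling_rem (k z))"
proof -
  have PX_pos: "PX (fst z) > 0" if "Q z > 0" for z
    by (rule abs_cont_joint_pos(1)[OF PX W cont that])
  note ln_A = ln_card_tclass_marg_Y(2)[OF counts sum_Q]
  note ln_p = ln_cond_type_prob(2)[of k n Q PX, OF counts sum_Q PX_pos]
  note D1 = kl_div_joint[OF PX W Q_nonneg cont]
  note D2 = kl_div_prod_marg_Y[where Q = Q and PX = PX, OF Q_nonneg PX_pos]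
  show "ln (card (tclass n (marg_Y Q))) + real n * (\<Sum>z\<in>UNIV. Q z * ln (W (fst z) (snd z)))
      + ln (cond_type_prob n PX Q)
      = - (real n * kl_div Q (joint PX W)) + stirling_rem n - (\<Sum>z\<in>UNIV. stirling_rem (k z))"
    by (simp add: ln_A ln_p D1 algebra_simps)
  show "ln (cond_type_prob n PX Q) = - (real n * kl_div Q (prod_dist PX (marg_Y Q)))
      + (\<Sum>b\<in>UNIV. stirling_rem (\<Sum>a\<in>UNIV. k (a, b))) - (\<Sum>z\<in>UNIV. stirling_rem (k z))"
    by (simp add: ln_p D2 algebra_simps)
qed

lemma stirling_rem_counts_bounds:
  fixes k :: "'x::finite \<times> 'y::finite \<Rightarrow> nat"
  assumes "sum k UNIV = n" and "n \<ge> 1"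
  shows "0 \<le> (\<Sum>z\<in>UNIV. stirling_rem (k z))
      \<and> (\<Sum>z\<in>UNIV. stirling_rem (k z)) \<le> real (card (UNIV :: ('x \<times> 'y) set)) * (1 + ln n)"
    and "0 \<le> (\<Sum>b\<in>UNIV. stirling_rem (\<Sum>a\<in>UNIV. k (a, b)))
      \<and> (\<Sum>b\<in>UNIV. stirling_rem (\<Sum>a\<in>UNIV. k (a, b))) \<le> real (card (UNIV :: 'y set)) * (1 + ln n)"
    and "0 \<le> stirling_rem n \<and> stirling_rem n \<le> 1 + ln n"
  using member_le_sum[of _ UNIV k] member_le_sum[of _ UNIV "\<lambda>b. \<Sum>a\<in>UNIV. k (a, b)"]
    stirling_rem_bounds[of n n] assms
  by (auto intro!: sum_stirling_rem_bounds simp: sum_UNIV_pairs_swapped)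

lemma ln_type_weight:
  fixes PX :: "'x::finite \<Rightarrow> real" and W :: "'x \<Rightarrow> 'y::finite \<Rightarrow> real"
  assumes PX: "is_dist PX" and W: "\<And>a. is_dist (W a)" and Q: "Q \<in> n_types n"
    and cont: "abs_cont Q (joint PX W)"
  shows "type_weight PX W R n Q > 0"
    and "\<bar>ln (type_weight PX W R n Q) + real n * objective PX W R Q\<bar>
      \<le> (2 + 2 * real (card (UNIV :: 'y set)) + real (card (UNIV :: ('x \<times> 'y) set))) * (1 + ln n)"
proof -
  obtain k where counts: "\<And>z. real (k z) = real n * Q z"
    using n_types_counts[OF Q] by metis
  have sum_Q: "sum Q UNIV = 1" and Q_nonneg: "\<And>z. Q z \<ge> 0"
    using n_typesD[OF Q] by auto
  define SW where "SW = (\<Sum>z\<in>UNIV. Q z * ln (W (fst z) (snd z)))"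
  define A where "A = card (tclass n (marg_Y Q))"
  define p where "p = cond_type_prob n PX Q"
  define F where "F = min (2 * p) (exp (- (real n * R) / 2) * sqrt p)"
  define t where "t = real n * R / 2 - real n * kl_div Q (prod_dist PX (marg_Y Q)) / 2"
  have A_pos: "A > 0"
    unfolding A_def by (rule ln_card_tclass_marg_Y(1)[OF counts sum_Q])
  have p_pos: "p > 0"
    unfolding p_def using abs_cont_joint_pos(1)[OF PX W cont]
    by (intro ln_cond_type_prob(1)[of k n Q PX, OF counts sum_Q])
  then have F_pos: "F > 0" and ln_F: "ln F = min (ln 2 + ln p) (- (real n * R) / 2 + ln p / 2)"
    unfolding F_def by (simp_all add: ln_min ln_mult ln_sqrt)
  have weight_eq: "type_weight PX W R n Q = 1/2 * A * exp (real n * SW) * F"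
    unfolding type_weight_def exp_info_eq[OF PX W Q_nonneg cont] frakY_def A_def p_def SW_def F_def
    by (simp add: exp_neg_def powr_def)
  show "type_weight PX W R n Q > 0"
    unfolding weight_eq using A_pos F_pos by simp
  have ln_weight: "ln (type_weight PX W R n Q) = - ln 2 + ln A + real n * SW + ln F"
    unfolding weight_eq using A_pos F_pos by (simp add: ln_mult ln_div)
  have objective_eq: "real n * objective PX W R Q = real n * kl_div Q (joint PX W) + max 0 t"
  proof -
    have "real n / 2 * max 0 (R - kl_div Q (prod_dist PX (marg_Y Q))) = max 0 t"
      by (simp add: max_mult_distrib_left t_def algebra_simps)
    then show ?thesis
      by (simp add: objective_def algebra_simps)
  qed
  have min_cases: "ln F \<le> ln 2 + ln p" "ln F \<le> - (real n * R) / 2 + ln p / 2"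
    "ln F = ln 2 + ln p \<or> ln F = - (real n * R) / 2 + ln p / 2"
    unfolding ln_F by auto
  have max_cases: "max 0 t \<ge> 0" "max 0 t \<ge> t" "max 0 t = 0 \<or> max 0 t = t"
    by auto
  define L where "L = 1 + ln (real n)"
  have "0 < ln (2::real)" "ln (2::real) < 1" "L \<ge> 1"
    using n_types_pos[OF Q] by (simp_all add: ln_2_less_1 L_def)
  then show "\<bar>ln (type_weight PX W R n Q) + real n * objective PX W R Q\<bar>
      \<le> (2 + 2 * real (card (UNIV :: 'y set)) + real (card (UNIV :: ('x \<times> 'y) set))) * (1 + ln n)"
    unfolding ln_weight objective_eq L_def[symmetric] distrib_right mult.assoc
    using ln_type_weight_factors[OF PX W counts sum_Q Q_nonneg cont, folded A_def p_def SW_def]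
      stirling_rem_counts_bounds[OF sum_counts[OF counts sum_Q] n_types_pos[OF Q], folded L_def]
      min_cases max_cases
    unfolding t_def by linarith
qed

lemma tendsto_mod_div_self:
  assumes "m > 0"
  shows "(\<lambda>n. real (n mod m) / real n) \<longlonglongrightarrow> 0"
proof (rule tendsto_sandwich[of "\<lambda>_. 0" _ _ "\<lambda>n. real m / real n"])
  show "\<forall>\<^sub>F n in sequentially. real (n mod m) / real n \<le> real m / real n"
    using assms by (intro always_eventually allI divide_right_mono) (simp_all add: less_imp_le)
qed (auto intro: lim_const_over_n)

text \<open>Every type of length m is the limit of types of every length n \<ge> m with the same
  support: repeat the m counts n div m times and put the remainder on a point of the support.\<close>

lemma n_types_approx:
  fixes Q0 :: "'a::finite \<Rightarrow> real"
  assumes Q0: "Q0 \<in> n_types m"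
  obtains Qs where "\<And>n. n \<ge> m \<Longrightarrow> Qs n \<in> n_types n"
    and "\<And>n z. n \<ge> m \<Longrightarrow> Qs n z > 0 \<longleftrightarrow> Q0 z > 0"
    and "\<And>z. (\<lambda>n. Qs n z) \<longlonglongrightarrow> Q0 z"
proof -
  obtain k0 where k0: "\<And>z. real (k0 z) = real m * Q0 z"
    using n_types_counts[OF Q0] by metis
  have m_pos: "m \<ge> 1"
    by (rule n_types_pos[OF Q0])
  have Q0_nonneg: "\<And>z. Q0 z \<ge> 0" and sum_Q0: "sum Q0 UNIV = 1"
    using n_typesD[OF Q0] by auto
  obtain z0 where z0: "Q0 z0 > 0"
    using is_dist_exists_pos[of Q0] Q0_nonneg sum_Q0 by (auto simp: is_dist_def)
  have k0_pos: "k0 z > 0 \<longleftrightarrow> Q0 z > 0" for z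
  proof -
    have "real (k0 z) > 0 \<longleftrightarrow> Q0 z > 0"
      using k0[of z] m_pos by (simp add: zero_less_mult_iff)
    then show ?thesis
      by simp
  qed
  have sum_k0: "sum k0 UNIV = m"
    by (rule sum_counts[OF k0 sum_Q0])
  define Qs where "Qs n z = real ((n div m) * k0 z + (if z = z0 then n mod m else 0)) / real n"
    for n z
  have Qs_eq: "Qs n z = Q0 z + real (n mod m) / real n * ((if z = z0 then 1 else 0) - Q0 z)"
    if "n \<ge> m" for n z
  proof -
    have n_eq: "real n = real (n mod m) + real m * real (n div m)"
      by (metis mod_mult_div_eq of_nat_add of_nat_mult)
    show ?thesis
      using that m_pos k0[of z] by (simp add: Qs_def field_simps) (simp add: n_eq algebra_simps)
  qed
  show ?thesis
  proof
    fix n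
    assume n: "n \<ge> m"
    have "sum (Qs n) UNIV = real (\<Sum>z\<in>UNIV. (n div m) * k0 z + (if z = z0 then n mod m else 0)) / real n"
      unfolding Qs_def by (simp only: of_nat_sum sum_divide_distrib)
    also have "(\<Sum>z\<in>UNIV. (n div m) * k0 z + (if z = z0 then n mod m else 0)) = n"
      by (simp add: sum.distrib sum_k0 flip: sum_distrib_left)
    finally have "sum (Qs n) UNIV = 1"
      using n m_pos by simp
    moreover have "\<exists>k::nat. Qs n z = real k / real n" for z
      unfolding Qs_def by blast
    moreover have "Qs n z \<ge> 0" for z
      by (simp add: Qs_def)
    ultimately show "Qs n \<in> n_types n"
      unfolding n_types_def by blast
  next
    fix n z
    assume n: "n \<ge> m"
    then have "n div m \<ge> 1" and "real n > 0"
      using m_pos div_le_mono[OF n, of m] by auto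
    then show "Qs n z > 0 \<longleftrightarrow> Q0 z > 0"
      using k0_pos[of z] z0 by (auto simp: Qs_def zero_less_divide_iff simp flip: of_nat_mult of_nat_add)
  next
    fix z
    have "(\<lambda>n. Q0 z + real (n mod m) / real n * ((if z = z0 then 1 else 0) - Q0 z))
        \<longlonglongrightarrow> Q0 z + 0 * ((if z = z0 then 1 else 0) - Q0 z)"
      using m_pos by (intro tendsto_add tendsto_const tendsto_mult tendsto_mod_div_self) simp
    moreover have "\<forall>\<^sub>F n in sequentially. Q0 z + real (n mod m) / real n * ((if z = z0 then 1 else 0) - Q0 z) = Qs n z"
      unfolding eventually_sequentially by (intro exI[of _ m] allI impI) (rule Qs_eq[symmetric])
    ultimately show "(\<lambda>n. Qs n z) \<longlonglongrightarrow> Q0 z"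
      by (simp add: Lim_transform_eventually)
  qed
qed

lemma tendsto_kl_div:
  assumes Qs: "\<And>z. (\<lambda>n. Qs n z) \<longlonglongrightarrow> Q z" and Ps: "\<And>z. (\<lambda>n. Ps n z) \<longlonglongrightarrow> P z"
    and support: "\<forall>\<^sub>F n in sequentially. {z. Qs n z > 0} = {z. Q z > 0}"
    and cont: "abs_cont Q P"
  shows "(\<lambda>n. kl_div (Qs n) (Ps n)) \<longlonglongrightarrow> kl_div Q P"
proof -
  define S where "S = {z. Q z > 0}"
  have "(\<lambda>n. Qs n z * ln (Qs n z / Ps n z)) \<longlonglongrightarrow> Q z * ln (Q z / P z)" if "z \<in> S" for z
  proof -
    have "Q z > 0" "P z > 0"
      using that cont by (auto simp: S_def abs_cont_def)
    then show ?thesis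
      by (intro tendsto_intros Qs Ps) auto
  qed
  then have "(\<lambda>n. \<Sum>z\<in>S. Qs n z * ln (Qs n z / Ps n z)) \<longlonglongrightarrow> kl_div Q P"
    unfolding kl_div_def S_def[symmetric] by (rule tendsto_sum)
  moreover have "\<forall>\<^sub>F n in sequentially. (\<Sum>z\<in>S. Qs n z * ln (Qs n z / Ps n z)) = kl_div (Qs n) (Ps n)"
    using support by eventually_elim (simp add: kl_div_def S_def)
  ultimately show ?thesis
    by (rule Lim_transform_eventually)
qed

lemma tendsto_objective:
  assumes PX: "is_dist PX" and W: "\<And>a. is_dist (W a)" and Q_nonneg: "\<And>z. Q z \<ge> 0"
    and cont: "abs_cont Q (joint PX W)"
    and Qs: "\<And>z. (\<lambda>n. Qs n z) \<longlonglongrightarrow> Q z"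
    and support: "\<forall>\<^sub>F n in sequentially. {z. Qs n z > 0} = {z. Q z > 0}"
  shows "(\<lambda>n. objective PX W R (Qs n)) \<longlonglongrightarrow> objective PX W R Q"
proof -
  have "(\<lambda>n. kl_div (Qs n) (joint PX W)) \<longlonglongrightarrow> kl_div Q (joint PX W)"
    by (rule tendsto_kl_div[OF Qs tendsto_const support cont])
  moreover have "(\<lambda>n. prod_dist PX (marg_Y (Qs n)) z) \<longlonglongrightarrow> prod_dist PX (marg_Y Q) z" for z
    unfolding prod_dist_def marg_Y_def by (cases z) (auto intro!: tendsto_intros Qs)
  then have "(\<lambda>n. kl_div (Qs n) (prod_dist PX (marg_Y (Qs n)))) \<longlonglongrightarrow> kl_div Q (prod_dist PX (marg_Y Q))"
    by (rule tendsto_kl_div[OF Qs _ support abs_cont_prod_marg_Y[OF PX W Q_nonneg cont]])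
  ultimately show ?thesis
    unfolding objective_def by (intro tendsto_intros)
qed

lemma exists_joint_pos:
  assumes "is_dist PX" and "\<And>a. is_dist (W a)"
  obtains z where "joint PX W z > 0"
proof -
  obtain a where "PX a > 0"
    using is_dist_exists_pos[OF assms(1)] by blast
  moreover obtain b where "W a b > 0"
    using is_dist_exists_pos[OF assms(2)] by blast
  ultimately show ?thesis
    using that[of "(a, b)"] by (simp add: joint_def)
qed

definition empirical_exponent :: "('x::finite \<Rightarrow> real) \<Rightarrow> ('x \<Rightarrow> 'y::finite \<Rightarrow> real) \<Rightarrow> real \<Rightarrow> nat \<Rightarrow> real" where
  "empirical_exponent PX W R n = - ln (Max (type_weight PX W R n ` n_types n)) / n"

lemma Max_type_weight_attained:
  assumes PX: "is_dist PX" and W: "\<And>a. is_dist (W a)" and n: "n \<ge> 1"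
  obtains Q where "Q \<in> n_types n" and "abs_cont Q (joint PX W)"
    and "type_weight PX W R n Q = Max (type_weight PX W R n ` n_types n)"
proof -
  define V where "V = type_weight PX W R n"
  have finite_V: "finite (V ` n_types n)"
    by (simp add: n_types_finite)
  obtain z0 where "joint PX W z0 > 0"
    using exists_joint_pos[of PX W] PX W by blast
  then have point: "(\<lambda>z. if z = z0 then 1 else 0) \<in> n_types n"
    "abs_cont (\<lambda>z. if z = z0 then 1 else 0) (joint PX W)"
    using indicator_in_n_types[OF n] by (auto simp: abs_cont_def)
  have "Max (V ` n_types n) \<in> V ` n_types n"
    using Max_in[OF finite_V] point(1) by blast
  then obtain Q where Q: "Q \<in> n_types n" and Q_max: "V Q = Max (V ` n_types n)"
    by (metis imageE)
  have "V (\<lambda>z. if z = z0 then 1 else 0) \<le> V Q"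
    unfolding Q_max using finite_V point(1) by (intro Max_ge) auto
  then have "V Q > 0"
    using ln_type_weight(1)[OF PX W point, of R] unfolding V_def by linarith
  then have "abs_cont Q (joint PX W)"
    using type_weight_zero[OF PX W Q] unfolding V_def by fastforce
  then show ?thesis
    using that Q Q_max unfolding V_def by blast
qed

lemma empirical_exponent_le_objective:
  fixes PX :: "'x::finite \<Rightarrow> real" and W :: "'x \<Rightarrow> 'y::finite \<Rightarrow> real"
  defines "C \<equiv> 2 + 2 * real (card (UNIV :: 'y set)) + real (card (UNIV :: ('x \<times> 'y) set))"
  assumes PX: "is_dist PX" and W: "\<And>a. is_dist (W a)" and Q: "Q \<in> n_types n"
    and cont: "abs_cont Q (joint PX W)"
  shows "empirical_exponent PX W R n \<le> objective PX W R Q + C * (1 + ln n) / n"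
proof -
  have "type_weight PX W R n Q \<le> Max (type_weight PX W R n ` n_types n)"
    using Q by (intro Max_ge) (auto simp: n_types_finite)
  then have "ln (type_weight PX W R n Q) \<le> ln (Max (type_weight PX W R n ` n_types n))"
    using ln_type_weight(1)[OF PX W Q cont, of R] by (rule ln_mono)
  then have "- (real n * objective PX W R Q) - C * (1 + ln n) \<le> ln (Max (type_weight PX W R n ` n_types n))"
    using ln_type_weight(2)[OF PX W Q cont, of R] unfolding C_def by linarith
  then have "empirical_exponent PX W R n \<le> (real n * objective PX W R Q + C * (1 + ln n)) / n"
    unfolding empirical_exponent_def by (intro divide_right_mono) auto
  then show ?thesis
    using n_types_pos[OF Q] by (simp add: add_divide_distrib)
qed

lemma objective_le_empirical_exponent:
  fixes PX :: "'x::finite \<Rightarrow> real" and W :: "'x \<Rightarrow> 'y::finite \<Rightarrow> real"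
  defines "C \<equiv> 2 + 2 * real (card (UNIV :: 'y set)) + real (card (UNIV :: ('x \<times> 'y) set))"
  assumes PX: "is_dist PX" and W: "\<And>a. is_dist (W a)" and n: "n \<ge> 1"
  obtains Q where "Q \<in> n_types n" and "abs_cont Q (joint PX W)"
    and "objective PX W R Q - C * (1 + ln n) / n \<le> empirical_exponent PX W R n"
proof -
  obtain Q where Q: "Q \<in> n_types n" and cont: "abs_cont Q (joint PX W)"
    and Q_max: "type_weight PX W R n Q = Max (type_weight PX W R n ` n_types n)"
    by (rule Max_type_weight_attained[where R = R, OF PX W n])
  define M where "M = ln (Max (type_weight PX W R n ` n_types n))"
  have "M \<le> - (real n * objective PX W R Q) + C * (1 + ln n)"
    using ln_type_weight(2)[OF PX W Q cont, of R] unfolding M_def Q_max C_def by linarith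
  then have "(real n * objective PX W R Q - C * (1 + ln n)) / n \<le> - M / n"
    by (intro divide_right_mono) simp_all
  then have "objective PX W R Q - C * (1 + ln n) / n \<le> - M / n"
    using n by (simp add: diff_divide_distrib)
  then have "objective PX W R Q - C * (1 + ln n) / n \<le> empirical_exponent PX W R n"
    by (simp add: empirical_exponent_def M_def)
  then show ?thesis
    by (rule that[OF Q cont])
qed

lemma types_infty_iff: "Q \<in> types_infty \<longleftrightarrow> (\<exists>n. Q \<in> n_types n)"
  unfolding types_infty_def using n_types_pos by auto

lemma eventually_empirical_exponent_less:
  fixes PX :: "'x::finite \<Rightarrow> real" and W :: "'x \<Rightarrow> 'y::finite \<Rightarrow> real"
  assumes PX: "is_dist PX" and W: "\<And>a. is_dist (W a)" and Q0: "Q0 \<in> types_infty"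
    and cont: "abs_cont Q0 (joint PX W)" and less: "objective PX W R Q0 < u"
  shows "\<forall>\<^sub>F n in sequentially. empirical_exponent PX W R n < u"
proof -
  define C where "C = 2 + 2 * real (card (UNIV :: 'y set)) + real (card (UNIV :: ('x \<times> 'y) set))"
  obtain m where m: "Q0 \<in> n_types m"
    using Q0 by (auto simp: types_infty_iff)
  obtain Qs where Qs_types: "\<And>n. n \<ge> m \<Longrightarrow> Qs n \<in> n_types n"
    and Qs_support: "\<And>n z. n \<ge> m \<Longrightarrow> Qs n z > 0 \<longleftrightarrow> Q0 z > 0"
    and Qs_lim: "\<And>z. (\<lambda>n. Qs n z) \<longlonglongrightarrow> Q0 z"
    using n_types_approx[OF m] by blast
  have support: "\<forall>\<^sub>F n in sequentially. {z. Qs n z > 0} = {z. Q0 z > 0}"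
    using eventually_ge_at_top[of m] by eventually_elim (use Qs_support in auto)
  have "(\<lambda>n. objective PX W R (Qs n)) \<longlonglongrightarrow> objective PX W R Q0"
    by (rule tendsto_objective[OF PX W n_typesD(1)[OF m] cont Qs_lim support])
  moreover have "(\<lambda>n. C * (1 + ln (real n)) / real n) \<longlonglongrightarrow> 0"
    by real_asymp
  ultimately have "(\<lambda>n. objective PX W R (Qs n) + C * (1 + ln (real n)) / real n) \<longlonglongrightarrow> objective PX W R Q0 + 0"
    by (rule tendsto_add)
  then have "\<forall>\<^sub>F n in sequentially. objective PX W R (Qs n) + C * (1 + ln (real n)) / real n < u"
    using less by (intro order_tendstoD(2)) auto
  then show ?thesis
    using eventually_ge_at_top[of m]
  proof eventually_elim
    case (elim n)
    have "Qs n \<in> n_types n"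
      using Qs_types elim(2) by blast
    moreover have "abs_cont (Qs n) (joint PX W)"
      using cont Qs_support[OF elim(2)] unfolding abs_cont_def by simp
    ultimately have "empirical_exponent PX W R n \<le> objective PX W R (Qs n) + C * (1 + ln n) / n"
      unfolding C_def by (rule empirical_exponent_le_objective[OF PX W])
    then show ?case
      using elim(1) by simp
  qed
qed

lemma eventually_less_empirical_exponent:
  fixes PX :: "'x::finite \<Rightarrow> real" and W :: "'x \<Rightarrow> 'y::finite \<Rightarrow> real"
  assumes PX: "is_dist PX" and W: "\<And>a. is_dist (W a)"
    and lower: "\<And>Q. Q \<in> types_infty \<Longrightarrow> abs_cont Q (joint PX W) \<Longrightarrow> L \<le> objective PX W R Q"
    and less: "l < L"
  shows "\<forall>\<^sub>F n in sequentially. l < empirical_exponent PX W R n"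
proof -
  define C where "C = 2 + 2 * real (card (UNIV :: 'y set)) + real (card (UNIV :: ('x \<times> 'y) set))"
  have "(\<lambda>n. C * (1 + ln (real n)) / real n) \<longlonglongrightarrow> 0"
    by real_asymp
  then have "\<forall>\<^sub>F n in sequentially. C * (1 + ln (real n)) / real n < L - l"
    using less by (intro order_tendstoD(2)) auto
  then show ?thesis
    using eventually_ge_at_top[of 1]
  proof eventually_elim
    case (elim n)
    obtain Q where Q: "Q \<in> n_types n" "abs_cont Q (joint PX W)"
      and bound: "objective PX W R Q - C * (1 + ln n) / n \<le> empirical_exponent PX W R n"
      by (rule objective_le_empirical_exponent[where R = R, OF PX W elim(2), folded C_def])
    have "L \<le> objective PX W R Q"
      using Q by (intro lower) (auto simp: types_infty_iff)
    then show ?case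
      using bound elim by simp
  qed
qed

lemma tendsto_empirical_exponent:
  fixes PX :: "'x::finite \<Rightarrow> real" and W :: "'x \<Rightarrow> 'y::finite \<Rightarrow> real"
  assumes PX: "is_dist PX" and W: "\<And>a. is_dist (W a)"
  shows "((\<lambda>n. ereal (empirical_exponent PX W R n))
    \<longlongrightarrow> (INF Q\<in>types_infty. rel_ent Q (joint PX W)
          + ereal (1/2) * max 0 (ereal R - rel_ent Q (prod_dist PX (marg_Y Q))))) sequentially"
    (is "(_ \<longlongrightarrow> (INF Q\<in>types_infty. ?F Q)) _")
proof (rule order_tendstoI)
  have F_finite: "?F Q = ereal (objective PX W R Q)"
    if Q: "Q \<in> types_infty" and cont: "abs_cont Q (joint PX W)" for Q
  proof -
    obtain m where m: "Q \<in> n_types m"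
      using Q unfolding types_infty_iff by blast
    show ?thesis
      by (rule objective_ereal[OF PX W n_typesD(1)[OF m] cont])
  qed
  {
    fix u
    assume "(INF Q\<in>types_infty. ?F Q) < u"
    then obtain Q0 where Q0: "Q0 \<in> types_infty" "?F Q0 < u"
      by (auto simp: INF_less_iff)
    have cont: "abs_cont Q0 (joint PX W)"
    proof (rule ccontr)
      assume "\<not> abs_cont Q0 (joint PX W)"
      then have "?F Q0 = \<infinity>"
        by (rule objective_infinite[OF PX W])
      then have "\<infinity> < u"
        using Q0(2) by (simp only:)
      then show False
        by simp
    qed
    show "\<forall>\<^sub>F n in sequentially. ereal (empirical_exponent PX W R n) < u"
    proof (cases u)
      case (real u')
      then have "objective PX W R Q0 < u'"
        using Q0(2) F_finite[OF Q0(1) cont] by simp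
      then have "\<forall>\<^sub>F n in sequentially. empirical_exponent PX W R n < u'"
        by (rule eventually_empirical_exponent_less[OF PX W Q0(1) cont])
      then show ?thesis
        using real by simp
    qed (use Q0 in auto)
  }
  {
    fix l
    assume l: "l < (INF Q\<in>types_infty. ?F Q)"
    obtain z0 where "joint PX W z0 > 0"
      using exists_joint_pos[of PX W] PX W by blast
    define \<delta> where "\<delta> = (\<lambda>z. if z = z0 then 1 else 0 :: real)"
    have "\<delta> \<in> n_types 1"
      unfolding \<delta>_def by (rule indicator_in_n_types) simp
    then have \<delta>: "\<delta> \<in> types_infty" "abs_cont \<delta> (joint PX W)"
      using \<open>joint PX W z0 > 0\<close> by (auto simp: types_infty_iff abs_cont_def \<delta>_def)
    have "(INF Q\<in>types_infty. ?F Q) \<le> ?F \<delta>"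
      using \<delta>(1) by (rule INF_lower)
    also have "\<dots> = ereal (objective PX W R \<delta>)"
      using F_finite \<delta> by blast
    finally obtain L where L: "(INF Q\<in>types_infty. ?F Q) = ereal L"
      using l by (cases "INF Q\<in>types_infty. ?F Q") auto
    have lower: "L \<le> objective PX W R Q" if "Q \<in> types_infty" "abs_cont Q (joint PX W)" for Q
      using INF_lower[OF that(1), of ?F] F_finite[OF that] unfolding L by simp
    show "\<forall>\<^sub>F n in sequentially. l < ereal (empirical_exponent PX W R n)"
    proof (cases l)
      case (real l')
      then have "l' < L"
        using l L by simp
      with PX W lower have "\<forall>\<^sub>F n in sequentially. l' < empirical_exponent PX W R n"
        by (rule eventually_less_empirical_exponent)
      then show ?thesis
        using real by simp
    qed (use l L in auto)
  }
qed

theorem lemma14: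
  fixes PX :: "'x::finite \<Rightarrow> real" and W :: "'x \<Rightarrow> 'y::finite \<Rightarrow> real" and R :: real
  assumes "is_dist PX"
    and "\<And>a. is_dist (W a)"
    and "R \<ge> 0"
  shows "((\<lambda>n. ereal (- (1 / real n) * ln (Max
            ((\<lambda>Q. 1/2 * real (card (tclass n (marg_Y Q)))
                   * exp_neg (real n) (exp_info W Q)
                   * frakY (exp (real n * R)) n PX Q) ` n_types n))))
         \<longlongrightarrow>
         (INF Q\<in>types_infty. rel_ent Q (joint PX W)
              + ereal (1/2) * max 0 (ereal R - rel_ent Q (prod_dist PX (marg_Y Q)))))
        sequentially"
  using tendsto_empirical_exponent[where R = R, OF assms(1,2)]
  by (simp add: empirical_exponent_def type_weight_def)

end
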